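(* Let $U$ be a convex $2n$-gon with distinct vertices $U_1,\dots,U_{2n}$ in counterclockwise order, centered at the origin ($U_{i+n}=-U_i$, indices modulo $2n$), and let $P$ be a convex polygon with nonempty interior whose vertex list is $P_1,\dots,P_{2n}$ (consecutive entries may coincide) such that corresponding sides and diagonals are parallel: $P_{i+1}-P_i=\lambda_{i+\frac12}(U_{i+1}-U_i)$ with $\lambda_{i+\frac12}\ge0$, and $P_i-P_{i+n}$ is parallel to $U_i-U_{i+n}$, for all $i$. Then, in the Minkowski plane $(\mathbb{R}^2,U)$, $P$ has constant $U$-width.
   Context: The Minkowski plane $(\mathbb{R}^2,U)$ is $\mathbb{R}^2$ with the norm whose unit ball is $U$. The dual norm is identified with $\|v\|=\sup\{[u,v]:u\in U\}$, where $[x,y]$ is the determinant of the matrix with columns $x,y$; its unit ball is the dual unit ball. For $v$ in the dual unit circle ($\|v\|=1$), the support function of $P$ is $h(P)(v)=\sup\{[p,v]:p\in P\}$ and the width of $P$ in direction $v$ is $w(P)(v)=h(P)(v)+h(P)(-v)$. $P$ has constant $U$-width if $w(P)(v)$ does not depend on $v$. *)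

theory Defs
  imports "HOL-Analysis.Analysis"
begin

text \<open>Points of the plane are pairs of reals. [x,y] is the determinant of the matrix with columns x, y.\<close>
definition det2 :: "real \<times> real \<Rightarrow> real \<times> real \<Rightarrow> real" where
  "det2 x y = fst x * snd y - snd x * fst y"

definition dual_norm :: "(real \<times> real) set \<Rightarrow> real \<times> real \<Rightarrow> real" where
  "dual_norm K v = Sup {det2 u v | u. u \<in> K}"

definition support_fun :: "(real \<times> real) set \<Rightarrow> real \<times> real \<Rightarrow> real" where
  "support_fun P v = Sup {det2 p v | p. p \<in> P}"

definition width :: "(real \<times> real) set \<Rightarrow> real \<times> real \<Rightarrow> real" where
  "width P v = support_fun P v + support_fun P (- v)"

definition constant_width :: "(real \<times> real) set \<Rightarrow> (real \<times> real) set \<Rightarrow> bool" where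
  "constant_width K P \<longleftrightarrow> (\<exists>c. \<forall>v. dual_norm K v = 1 \<longrightarrow> width P v = c)"

end

theory Submission imports Defs begin

(* Fix v of dual norm 1 and a vertex U i maximising [-, v], so that [U i, v] = 1; by central
   symmetry U (i + n) minimises it. Convexity of U forces [U k, v] to decrease for k from i to i + n
   and to increase from i + n to i + 2n, and since the sides of P are nonnegative multiples of the
   corresponding sides of U, the same holds for [P k, v]. Hence the width of P in direction v is
   [P i - P (i + n), v]. Comparing consecutive antipodal chords of P with its sides shows that
   P i - P (i + n) = mu U i for a single mu, so this width is mu for every v. *)

lemma det2_diff_left: "det2 (x - y) v = det2 x v - det2 y v"
  by (simp add: det2_def algebra_simps)

lemma det2_add_left: "det2 (x + y) v = det2 x v + det2 y v"
  by (simp add: det2_def algebra_simps)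

lemma det2_scaleR_left: "det2 (c *\<^sub>R x) v = c * det2 x v"
  by (simp add: det2_def algebra_simps)

lemma det2_uminus_left: "det2 (- x) v = - det2 x v"
  by (simp add: det2_def)

lemma det2_uminus_right: "det2 x (- v) = - det2 x v"
  by (simp add: det2_def)

lemma det2_self: "det2 x x = 0"
  by (simp add: det2_def)

lemma det2_commute: "det2 x y = - det2 y x"
  by (simp add: det2_def)

lemma det2_cramer: "det2 e e' *\<^sub>R x = det2 x e' *\<^sub>R e + det2 e x *\<^sub>R e'"
  by (simp add: det2_def prod_eq_iff algebra_simps)

lemma det2_eq_0_imp_scaleR:
  assumes "det2 a b = 0" "b \<noteq> 0"
  shows "\<exists>c. a = c *\<^sub>R b"
proof (cases "fst b = 0")
  case False
  then show ?thesis
    using assms by (intro exI[of _ "fst a / fst b"]) (auto simp: det2_def prod_eq_iff field_simps)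
next
  case True
  then have "snd b \<noteq> 0" using assms(2) by (simp add: prod_eq_iff)
  then show ?thesis
    using assms True by (intro exI[of _ "snd a / snd b"]) (auto simp: det2_def prod_eq_iff field_simps)
qed

lemma scaleR_eq_scaleR_independent:
  assumes "det2 a b \<noteq> 0" "s *\<^sub>R a = t *\<^sub>R b"
  shows "s = 0" "t = 0"
proof -
  have "s * det2 a b = t * det2 b b" "s * det2 a a = t * det2 b a"
    using arg_cong[OF assms(2), of "\<lambda>x. det2 x b"] arg_cong[OF assms(2), of "\<lambda>x. det2 x a"]
    by (simp_all add: det2_scaleR_left)
  then show "s = 0" "t = 0"
    using assms(1) det2_commute[of b a] by (simp_all add: det2_self)
qed

lemma Sup_det2_convex_hull:
  assumes "s0 \<in> S" "\<And>s. s \<in> S \<Longrightarrow> det2 s v \<le> det2 s0 v"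
  shows "Sup {det2 p v | p. p \<in> convex hull S} = det2 s0 v"
proof -
  have "convex hull S \<subseteq> {x. inner (snd v, - fst v) x \<le> det2 s0 v}"
    using assms(2) by (intro hull_minimal convex_halfspace_le) (auto simp: det2_def algebra_simps)
  then have "\<forall>p\<in>convex hull S. det2 p v \<le> det2 s0 v"
    by (auto simp: det2_def algebra_simps)
  with hull_inc[OF assms(1)] show ?thesis
    by (intro cSup_eq_maximum) blast+
qed

lemma periodic_mod:
  assumes "\<And>i. f (i + N) = f i"
  shows "f i = f (i mod (N::nat))"
proof -
  have "f (j + q * N) = f j" for j q
  proof (induction q)
    case (Suc q)
    then show ?case using assms[of "j + q * N"] by (simp add: ac_simps)
  qed simp
  from this[of "i mod N" "i div N"] show ?thesis by simp
qed

lemma periodic_in_image: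
  fixes f :: "nat \<Rightarrow> 'a"
  assumes "\<And>i. f (i + N) = f i" "0 < N"
  shows "f j \<in> f ` {..<N}"
  using periodic_mod[of f N j] assms by auto

lemma add_mod_neq:
  assumes "0 < d" "d < (N::nat)"
  shows "(a + d) mod N \<noteq> a mod N"
proof
  assume "(a + d) mod N = a mod N"
  then have "N dvd d" using mod_eq_dvd_iff_nat[of a "a + d" N] by simp
  with assms show False by (auto dest: dvd_imp_le)
qed

lemma antimono_on_interval:
  fixes h :: "nat \<Rightarrow> 'a::preorder"
  assumes descent: "\<And>k. a \<le> k \<Longrightarrow> k < b \<Longrightarrow> h (Suc k) \<le> h k"
    and "a \<le> x" "x \<le> y" "y \<le> b"
  shows "h y \<le> h x"
  using \<open>x \<le> y\<close> \<open>y \<le> b\<close>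
proof (induction y rule: dec_induct)
  case (step k)
  have "h (Suc k) \<le> h k"
    using descent[of k] \<open>a \<le> x\<close> step.hyps(1) step.prems by simp
  also have "h k \<le> h x"
    using step.IH step.prems by simp
  finally show ?case .
qed simp

lemma periodic_unimodal_bounds:
  fixes h :: "nat \<Rightarrow> real"
  assumes periodic: "\<And>k. h (k + N) = h k" and "0 < N" "m \<le> N"
    and descending: "\<And>k. k < m \<Longrightarrow> h (Suc k) \<le> h k"
    and ascending: "\<And>k. m \<le> k \<Longrightarrow> k < N \<Longrightarrow> h k \<le> h (Suc k)"
  shows "h m \<le> h j \<and> h j \<le> h 0"
proof -
  define k where "k = j mod N"
  have "k < N" "h j = h k"
    using periodic_mod[of h N j] periodic \<open>0 < N\<close> by (auto simp: k_def)
  have down: "h y \<le> h x" if "x \<le> y" "y \<le> m" for x y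
    using antimono_on_interval[of 0 m h x y] descending that by simp
  have up: "h x \<le> h y" if "m \<le> x" "x \<le> y" "y \<le> N" for x y
    using antimono_on_interval[of m N "\<lambda>k. - h k" x y] ascending that by simp
  show ?thesis
  proof (cases "k \<le> m")
    case True
    then show ?thesis using down[of k m] down[of 0 k] \<open>h j = h k\<close> by simp
  next
    case False
    moreover have "h N = h 0" using periodic[of 0] by simp
    ultimately show ?thesis using up[of m k] up[of k N] \<open>k < N\<close> \<open>h j = h k\<close> by simp
  qed
qed

locale ccw_polygon =
  fixes N :: nat and U :: "nat \<Rightarrow> real \<times> real"
  assumes three_le_N: "3 \<le> N"
    and periodic: "U (i + N) = U i"
    and ccw: "i < N \<Longrightarrow> j < N \<Longrightarrow> j \<noteq> i \<Longrightarrow> j \<noteq> Suc i mod N \<Longrightarrow>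
      0 < det2 (U (Suc i) - U i) (U j - U i)"
begin

lemma U_mod: "U i = U (i mod N)"
  using periodic_mod[of U N] periodic by blast

lemma vertex_in_image: "U j \<in> U ` {..<N}"
  using periodic_in_image[of U N j] periodic three_le_N by simp

lemma ccw_mod:
  assumes "j mod N \<noteq> a mod N" "j mod N \<noteq> Suc a mod N"
  shows "0 < det2 (U (Suc a) - U a) (U j - U a)"
proof -
  have "U (Suc (a mod N)) = U (Suc a)"
    using U_mod[of "Suc (a mod N)"] U_mod[of "Suc a"] by (simp add: mod_Suc_eq)
  then show ?thesis
    using ccw[of "a mod N" "j mod N"] assms three_le_N U_mod[of a] U_mod[of j]
    by (simp add: mod_Suc_eq)
qed

lemma ccw_nonneg: "0 \<le> det2 (U (Suc a) - U a) (U j - U a)"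
proof (cases "j mod N = a mod N \<or> j mod N = Suc a mod N")
  case True
  then have "U j = U a \<or> U j = U (Suc a)"
    using U_mod[of j] U_mod[of a] U_mod[of "Suc a"] by auto
  then show ?thesis by (auto simp: det2_def algebra_simps)
next
  case False
  then show ?thesis using ccw_mod[of j a] by simp
qed

lemma exists_max_vertex:
  obtains i where "\<And>j. det2 (U j) v \<le> det2 (U i) v"
proof -
  obtain i where "\<forall>j<N. det2 (U j) v \<le> det2 (U i) v"
    using ex_is_arg_min_if_finite[of "{..<N}" "\<lambda>j. - det2 (U j) v"] three_le_N
    by (auto simp: is_arg_min_linorder)
  then show ?thesis
    using that U_mod three_le_N by (metis mod_less_divisor not_numeral_le_zero neq0_conv)
qed

lemma dual_norm_convex_hull:
  assumes "\<And>j. det2 (U j) v \<le> det2 (U i) v"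
  shows "dual_norm (convex hull (U ` {..<N})) v = det2 (U i) v"
  unfolding dual_norm_def using vertex_in_image assms
  by (intro Sup_det2_convex_hull) auto

text \<open>If [-, v] decreased along the edge e ending at U (Suc a) but increased along the next edge e',
  then by Cramer's rule and convexity U (i + m) - U (Suc a) would lie in the cone spanned by -e and e',
  so [U (i + m), v] > [U (Suc a), v], contradicting minimality.\<close>
lemma det2_descends_from_max_to_min:
  assumes max: "\<And>j. det2 (U j) v \<le> det2 (U i) v"
    and min: "\<And>j. det2 (U (i + m)) v \<le> det2 (U j) v"
    and "m < N" "k < m"
  shows "det2 (U (Suc (i + k))) v \<le> det2 (U (i + k)) v"
  using \<open>k < m\<close>
proof (induction k)
  case 0
  then show ?case using max by simp
next
  case (Suc k)
  define a where "a = i + k"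
  define e where "e = U (Suc a) - U a"
  define e' where "e' = U (Suc (Suc a)) - U (Suc a)"
  define x where "x = U (i + m) - U (Suc a)"
  have fe: "det2 e v \<le> 0"
    using Suc by (simp add: a_def e_def det2_diff_left)
  show ?case
  proof (rule ccontr)
    assume "\<not> ?case"
    then have fe': "0 < det2 e' v"
      by (simp add: e'_def a_def det2_diff_left)
    have "i + m = a + (m - k)" "i + m = Suc a + (m - Suc k)"
      using Suc.prems by (simp_all add: a_def)
    then have "(i + m) mod N \<noteq> a mod N" "(i + m) mod N \<noteq> Suc a mod N"
      using add_mod_neq[of "m - k" N a] add_mod_neq[of "m - Suc k" N "Suc a"] Suc.prems \<open>m < N\<close>
      by simp_all
    then have "0 < det2 e (U (i + m) - U a)"
      using ccw_mod[of "i + m" a] by (simp add: e_def)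
    moreover have "U (i + m) - U a = x + e" by (simp add: x_def e_def)
    ultimately have left_of_e: "0 < det2 e x"
      by (simp add: det2_def algebra_simps)
    have left_of_e': "0 \<le> det2 e' x"
      using ccw_nonneg[of "Suc a" "i + m"] by (simp add: e'_def x_def)
    have "(a + 2) mod N \<noteq> a mod N" "(Suc a + 1) mod N \<noteq> Suc a mod N"
      using add_mod_neq[of 2 N a] add_mod_neq[of 1 N "Suc a"] three_le_N by simp_all
    then have "0 < det2 e (U (Suc (Suc a)) - U a)"
      using ccw_mod[of "Suc (Suc a)" a] by (simp add: e_def)
    moreover have "U (Suc (Suc a)) - U a = e + e'" by (simp add: e_def e'_def)
    ultimately have turn: "0 < det2 e e'"
      by (simp add: det2_def algebra_simps)
    have "det2 e e' * det2 x v = det2 x e' * det2 e v + det2 e x * det2 e' v"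
      using arg_cong[OF det2_cramer[of e e' x], of "\<lambda>y. det2 y v"]
      by (simp add: det2_add_left det2_scaleR_left)
    moreover have "det2 x e' * det2 e v \<ge> 0"
      using left_of_e' fe det2_commute[of x e'] by (simp add: mult_nonneg_nonpos)
    ultimately have "0 < det2 x v"
      using left_of_e fe' turn by (smt (verit) mult_pos_pos zero_less_mult_iff)
    moreover have "det2 x v \<le> 0"
      using min[of "Suc a"] by (simp add: x_def det2_diff_left)
    ultimately show False by simp
  qed
qed

end

locale centred_polygon = ccw_polygon "2 * n" U for n U +
  assumes antipodal: "U (i + n) = - U i"
begin

lemma two_le_n: "2 \<le> n"
  using three_le_N by simp

lemma det2_consecutive_pos: "0 < det2 (U a) (U (Suc a))"
proof -
  have "(a + n) mod (2 * n) \<noteq> a mod (2 * n)" "(Suc a + (n - 1)) mod (2 * n) \<noteq> Suc a mod (2 * n)"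
    using add_mod_neq[of n "2 * n" a] add_mod_neq[of "n - 1" "2 * n" "Suc a"] two_le_n by simp_all
  moreover have "Suc a + (n - 1) = a + n" using two_le_n by simp
  ultimately have "0 < det2 (U (Suc a) - U a) (U (a + n) - U a)"
    using ccw_mod[of "a + n" a] by simp
  then show ?thesis using antipodal[of a] by (simp add: det2_def algebra_simps)
qed

lemma antipode_min:
  assumes "\<And>j. det2 (U j) v \<le> det2 (U i) v"
  shows "det2 (U (i + n)) v \<le> det2 (U j) v"
  using assms[of "j + n"] antipodal[of i] antipodal[of j] by (simp add: det2_uminus_left)

lemma det2_edge_signs:
  assumes max: "\<And>j. det2 (U j) v \<le> det2 (U i) v"
  shows "k < n \<Longrightarrow> det2 (U (Suc (i + k))) v \<le> det2 (U (i + k)) v"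
    and "n \<le> k \<Longrightarrow> k < 2 * n \<Longrightarrow> det2 (U (i + k)) v \<le> det2 (U (Suc (i + k))) v"
proof -
  show "k < n \<Longrightarrow> det2 (U (Suc (i + k))) v \<le> det2 (U (i + k)) v"
    using det2_descends_from_max_to_min[OF max antipode_min[OF max]] by simp
  assume "n \<le> k" "k < 2 * n"
  have "U (i + n + n) = U i"
    using periodic[of i] by (simp add: mult_2 add.assoc)
  then have "det2 (U (Suc (i + n + (k - n)))) (- v) \<le> det2 (U (i + n + (k - n))) (- v)"
    using det2_descends_from_max_to_min[of "- v" "i + n" n "k - n"] \<open>n \<le> k\<close> \<open>k < 2 * n\<close>
      antipode_min[OF max] max by (simp add: det2_uminus_right)
  moreover have "i + n + (k - n) = i + k" using \<open>n \<le> k\<close> by simp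
  ultimately show "det2 (U (i + k)) v \<le> det2 (U (Suc (i + k))) v"
    by (simp add: det2_uminus_right)
qed

lemma parallel_polygon_extremes:
  fixes P :: "nat \<Rightarrow> real \<times> real" and lam :: "nat \<Rightarrow> real"
  assumes P_periodic: "\<And>i. P (i + 2 * n) = P i"
    and lam_nonneg: "\<And>i. 0 \<le> lam i"
    and sides: "\<And>i. P (Suc i) - P i = lam i *\<^sub>R (U (Suc i) - U i)"
    and max: "\<And>j. det2 (U j) v \<le> det2 (U i) v"
  shows "det2 (P (i + n)) v \<le> det2 (P j) v \<and> det2 (P j) v \<le> det2 (P i) v"
proof -
  define h where "h k = det2 (P (i + k)) v" for k
  have h_step: "h (Suc k) - h k = lam (i + k) * (det2 (U (Suc (i + k))) v - det2 (U (i + k)) v)" for k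
    using arg_cong[OF sides[of "i + k"], of "\<lambda>x. det2 x v"]
    by (simp add: h_def det2_diff_left det2_scaleR_left)
  have "h n \<le> h k \<and> h k \<le> h 0" for k
  proof (rule periodic_unimodal_bounds[where N = "2 * n"])
    show "h (k + 2 * n) = h k" for k
      using P_periodic[of "i + k"] by (simp add: h_def add.assoc)
    show "h (Suc k) \<le> h k" if "k < n" for k
    proof -
      have "lam (i + k) * (det2 (U (Suc (i + k))) v - det2 (U (i + k)) v) \<le> 0"
        using det2_edge_signs(1)[OF max that] lam_nonneg[of "i + k"] by (simp add: mult_nonneg_nonpos)
      then show ?thesis using h_step[of k] by simp
    qed
    show "h k \<le> h (Suc k)" if "n \<le> k" "k < 2 * n" for k
    proof -
      have "0 \<le> lam (i + k) * (det2 (U (Suc (i + k))) v - det2 (U (i + k)) v)"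
        using det2_edge_signs(2)[OF max that] lam_nonneg[of "i + k"] by simp
      then show ?thesis using h_step[of k] by simp
    qed
  qed (use two_le_n in simp_all)
  moreover have "P j = P (i + (j + (2 * n - 1) * i))"
  proof -
    obtain r where "2 * n = Suc r" using two_le_n not0_implies_Suc by fastforce
    then have "i + (j + (2 * n - 1) * i) = j + i * (2 * n)" by simp
    moreover have "P (j + i * (2 * n)) = P j"
      using periodic_mod[of P "2 * n", OF P_periodic] by (metis mod_mult_self1)
    ultimately show ?thesis by metis
  qed
  ultimately show ?thesis by (simp add: h_def)
qed

lemma width_parallel_polygon:
  fixes P :: "nat \<Rightarrow> real \<times> real" and lam :: "nat \<Rightarrow> real"
  assumes P_periodic: "\<And>i. P (i + 2 * n) = P i"
    and lam_nonneg: "\<And>i. 0 \<le> lam i"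
    and sides: "\<And>i. P (Suc i) - P i = lam i *\<^sub>R (U (Suc i) - U i)"
    and chords: "\<And>i. P i - P (i + n) = mu *\<^sub>R U i"
    and max: "\<And>j. det2 (U j) v \<le> det2 (U i) v"
  shows "width (convex hull (P ` {..<2 * n})) v = mu * det2 (U i) v"
proof -
  have bounds: "det2 (P (i + n)) v \<le> det2 (P j) v \<and> det2 (P j) v \<le> det2 (P i) v" for j
    using parallel_polygon_extremes[OF P_periodic lam_nonneg sides max] by blast
  have P_in: "P j \<in> P ` {..<2 * n}" for j
    using periodic_in_image[of P "2 * n" j] P_periodic two_le_n by simp
  have "support_fun (convex hull (P ` {..<2 * n})) v = det2 (P i) v"
    unfolding support_fun_def using P_in bounds by (intro Sup_det2_convex_hull) auto
  moreover have "support_fun (convex hull (P ` {..<2 * n})) (- v) = - det2 (P (i + n)) v"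
    unfolding support_fun_def using P_in bounds
    by (subst Sup_det2_convex_hull) (auto simp: det2_uminus_right)
  ultimately show ?thesis
    unfolding width_def using chords[of i] by (simp add: det2_diff_left[symmetric] det2_scaleR_left)
qed

lemma antipodal_chords_const_multiple:
  fixes P :: "nat \<Rightarrow> real \<times> real" and lam :: "nat \<Rightarrow> real"
  assumes sides: "\<And>i. P (Suc i) - P i = lam i *\<^sub>R (U (Suc i) - U i)"
    and diagonals: "\<And>i. det2 (P i - P (i + n)) (U i) = 0"
  obtains mu where "\<And>i. P i - P (i + n) = mu *\<^sub>R U i"
proof -
  have "U i \<noteq> 0" for i
    using det2_consecutive_pos[of i] by (auto simp: det2_def)
  then have "\<forall>i. \<exists>c. P i - P (i + n) = c *\<^sub>R U i"
    using det2_eq_0_imp_scaleR diagonals by blast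
  then obtain mu where mu: "\<And>i. P i - P (i + n) = mu i *\<^sub>R U i"
    by metis
  have "mu (Suc i) = mu i" for i
  proof -
    define c where "c = lam i + lam (i + n)"
    have "mu (Suc i) *\<^sub>R U (Suc i) - mu i *\<^sub>R U i
        = (P (Suc i) - P i) - (P (Suc (i + n)) - P (i + n))"
      using mu[of i] mu[of "Suc i"] by (simp add: algebra_simps)
    also have "\<dots> = lam i *\<^sub>R (U (Suc i) - U i) - lam (i + n) *\<^sub>R (U (Suc (i + n)) - U (i + n))"
      using sides by simp
    also have "\<dots> = c *\<^sub>R (U (Suc i) - U i)"
      using antipodal[of i] antipodal[of "Suc i"] by (simp add: c_def algebra_simps)
    finally have "(mu (Suc i) - c) *\<^sub>R U (Suc i) = (mu i - c) *\<^sub>R U i"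
      by (simp add: algebra_simps)
    moreover have "det2 (U (Suc i)) (U i) \<noteq> 0"
      using det2_consecutive_pos[of i] det2_commute[of "U i"] by simp
    ultimately have "mu (Suc i) - c = 0" "mu i - c = 0"
      using scaleR_eq_scaleR_independent by blast+
    then show ?thesis by simp
  qed
  then have "mu i = mu 0" for i
    by (induction i) simp_all
  then show ?thesis
    using that mu by metis
qed

end

theorem lemma2p4:
  fixes n :: nat and U P :: "nat \<Rightarrow> real \<times> real" and lam :: "nat \<Rightarrow> real"
  assumes n2: "n \<ge> 2"
    and U_per: "\<forall>i. U (i + 2 * n) = U i"
    and U_sym: "\<forall>i. U (i + n) = - U i"
    and U_dist: "inj_on U {..<2 * n}"
    and U_ccw: "\<forall>i<2 * n. \<forall>j<2 * n. j \<noteq> i \<and> j \<noteq> Suc i mod (2 * n) \<longrightarrow>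
                  det2 (U (Suc i) - U i) (U j - U i) > 0"
    and P_per: "\<forall>i. P (i + 2 * n) = P i"
    and P_vert: "\<forall>i<2 * n. P i extreme_point_of convex hull (P ` {..<2 * n})"
    and P_int: "interior (convex hull (P ` {..<2 * n})) \<noteq> {}"
    and lam_nonneg: "\<forall>i. lam i \<ge> 0"
    and sides: "\<forall>i. P (Suc i) - P i = lam i *\<^sub>R (U (Suc i) - U i)"
    and diags: "\<forall>i. det2 (P i - P (i + n)) (U i - U (i + n)) = 0"
  shows "constant_width (convex hull (U ` {..<2 * n})) (convex hull (P ` {..<2 * n}))"
proof -
  interpret centred_polygon n U
    using n2 U_per U_sym U_ccw by unfold_locales auto
  have "det2 (P i - P (i + n)) (U i - U (i + n)) = 2 * det2 (P i - P (i + n)) (U i)" for i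
    using U_sym by (simp add: det2_def algebra_simps)
  then have "det2 (P i - P (i + n)) (U i) = 0" for i
    using diags by simp
  then obtain mu where mu: "\<And>i. P i - P (i + n) = mu *\<^sub>R U i"
    using antipodal_chords_const_multiple sides by blast
  have "width (convex hull (P ` {..<2 * n})) v = mu"
    if "dual_norm (convex hull (U ` {..<2 * n})) v = 1" for v
  proof -
    obtain i where max: "\<And>j. det2 (U j) v \<le> det2 (U i) v"
      using exists_max_vertex by blast
    then show ?thesis
      using width_parallel_polygon[OF P_per[rule_format] lam_nonneg[rule_format] sides[rule_format] mu max]
        dual_norm_convex_hull[OF max] that by simp
  qed
  then show ?thesis
    unfolding constant_width_def by blast
qed

end
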